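(* Let $N=2^{L}$ with $L=L_1+L_2$, $L_1,L_2\ge1$, and split the index set $I=\{1,\dots,N\}$ into $n_2=2^{L_2}$ consecutive non-overlapping subintervals $I=\bigcup_{k=1}^{n_2}I_k$, each of length $n_1=2^{L_1}$. Let $\mathbf x_0\in\mathbb R^{n_1}$ have QTT rank $r_0$. For $k=1,\dots,n_2$ define $\mathbf x_k\in\mathbb R^N$ by: the restriction of $\mathbf x_k$ to $I_k$ equals $\mathbf x_0$, and $\mathbf x_k(i)=0$ for $i\in I\setminus I_k$. Let $\mathbf x=\mathbf x_1+\dots+\mathbf x_{n_2}$. Then for every $F\in\mathbb R^N$, $$\operatorname{rank}_{QTT}(F\odot\mathbf x)\le\operatorname{rank}_{QTT}(F)\,r_0.$$
   Context: $\odot$ denotes the entrywise (Hadamard) product of vectors. QTT (quantics tensor train) rank: a vector $\mathbf y\in\mathbb R^{2^m}$ is reshaped into a tensor $Y\in\mathbb R^{2\times\cdots\times2}$ of order $m$ via the binary coding $i-1=\sum_{\ell=1}^m(j_\ell-1)2^{\ell-1}$, $j_\ell\in\{1,2\}$, i.e. $Y(j_1,\dots,j_m)=\mathbf y(i)$. The TT ranks of $Y$ are $r_\ell=\operatorname{rank}$ of the unfolding matrix with rows indexed by $(j_1,\dots,j_\ell)$ and columns by $(j_{\ell+1},\dots,j_m)$, $\ell=1,\dots,m-1$; $\operatorname{rank}_{QTT}(\mathbf y)=\max_\ell r_\ell$. *)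

theory Defs
  imports "Jordan_Normal_Form.DL_Rank"
begin

(* A vector y in R^(2^m) is represented by y :: nat => real, entries y 0 .. y (2^m - 1)
   (0-based: index i of the paper corresponds to y (i-1)); entries beyond 2^m are ignored.
   Binary coding: i-1 = sum (j_l - 1) 2^(l-1), so the first l "bits" (j_1..j_l) are the
   low-order bits. *)

definition qtt_unfolding :: "nat \<Rightarrow> (nat \<Rightarrow> real) \<Rightarrow> nat \<Rightarrow> real mat" where
  "qtt_unfolding m y l = mat (2^l) (2^(m-l)) (\<lambda>(a,b). y (a + 2^l * b))"

definition tt_rank :: "nat \<Rightarrow> (nat \<Rightarrow> real) \<Rightarrow> nat \<Rightarrow> nat" where
  "tt_rank m y l = vec_space.rank (2^l) (qtt_unfolding m y l)"

(* rank_QTT(y) = max_{l=1..m-1} r_l.  For m \<le> 1 there are no interior unfoldings;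
   we then use the rank of the trivial 1 x 2^m unfolding (0 if y = 0, else 1). *)
definition qtt_rank :: "nat \<Rightarrow> (nat \<Rightarrow> real) \<Rightarrow> nat" where
  "qtt_rank m y = (if 2 \<le> m then Max ((tt_rank m y) ` {1..m-1}) else tt_rank m y 0)"

definition hadamard :: "(nat \<Rightarrow> real) \<Rightarrow> (nat \<Rightarrow> real) \<Rightarrow> nat \<Rightarrow> real" (infixl "\<odot>" 70) where
  "hadamard f g = (\<lambda>i. f i * g i)"

(* x_k (k = 0..n2-1, 0-based): copy of x0 on the k-th block of length n1, zero elsewhere *)
definition block_embed :: "nat \<Rightarrow> (nat \<Rightarrow> real) \<Rightarrow> nat \<Rightarrow> nat \<Rightarrow> real" where
  "block_embed n1 x0 k = (\<lambda>i. if k * n1 \<le> i \<and> i < (k+1) * n1 then x0 (i - k * n1) else 0)"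

end

theory Submission
  imports Defs
begin

text \<open>Write \<open>x\<close> for the sum of the block embeddings. On \<open>{0..<2^(L1+L2)}\<close> it is the
  \<open>2^L1\<close>-periodic extension of \<open>x0\<close>. The \<open>l\<close>-th unfolding of \<open>F \<odot> x\<close> is the entrywise product
  of the unfoldings of \<open>F\<close> and \<open>x\<close>, and entrywise products multiply ranks at most, since the
  columns of the product lie in the span of the products of two spanning sets. It remains to
  bound the rank of the unfolding of \<open>x\<close> by \<open>r0\<close>: for \<open>l < L1\<close> its columns are columns of the
  \<open>l\<close>-th unfolding of \<open>x0\<close>, and for \<open>l \<ge> L1\<close> its entries depend on the row index only, so it
  has rank at most one (and rank zero exactly when \<open>x0\<close> vanishes, i.e. when \<open>r0 = 0\<close>).\<close>

definition vec_hadamard :: "'a::times vec \<Rightarrow> 'a vec \<Rightarrow> 'a vec" where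
  "vec_hadamard u w = vec (dim_vec u) (\<lambda>i. u $ i * w $ i)"

definition mat_hadamard :: "'a::times mat \<Rightarrow> 'a mat \<Rightarrow> 'a mat" where
  "mat_hadamard A B = mat (dim_row A) (dim_col A) (\<lambda>ij. A $$ ij * B $$ ij)"

lemma col_mat_hadamard:
  assumes "A \<in> carrier_mat n nc" "B \<in> carrier_mat n nc" "j < nc"
  shows "col (mat_hadamard A B) j = vec_hadamard (col A j) (col B j)"
  using assms by (auto simp: mat_hadamard_def vec_hadamard_def)

lemma (in vec_space) dim_span_le_card:
  assumes "finite S" "S \<subseteq> carrier_vec n"
  shows "vectorspace.dim class_ring (span_vs S) \<le> card S"
proof -
  obtain U where U: "maximal U (\<lambda>T. T \<subseteq> S \<and> lin_indpt T)"
    using maximal_exists[of "\<lambda>T. T \<subseteq> S \<and> lin_indpt T" "card S" "{}"]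
    by (meson assms(1) card_mono empty_iff empty_subsetI finite_lin_indpt2 rev_finite_subset)
  then have "U \<subseteq> S" by (simp add: maximal_def)
  then show ?thesis using dim_span[OF assms(2,1) U] card_mono[OF assms(1)] by simp
qed

lemma (in vec_space) rank_le_card_of_cols_subset_span:
  assumes A: "A \<in> carrier_mat n nc" and S: "finite S" "S \<subseteq> carrier_vec n"
    and cols: "set (cols A) \<subseteq> span S"
  shows "rank A \<le> card S"
proof -
  have vs: "vectorspace class_ring (vs (span S))"
    using span_is_subspace[THEN subspace_is_vs, of S] S by auto
  have "submodule class_ring (span S) V" using S by (simp add: span_is_submodule)
  then have "subspace class_ring (span (set (cols A))) (vs (span S))"
    using vectorspace.span_is_subspace[OF vs, of "set (cols A)"] span_li_not_depend(1)[OF cols]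
      cols by auto
  moreover have "vectorspace.fin_dim class_ring (vs (span S))"
    "vectorspace.fin_dim class_ring (vs (span S)\<lparr>carrier := span (set (cols A))\<rparr>)"
    using fin_dim_span fin_dim_span_cols A S by auto
  ultimately have "rank A \<le> vectorspace.dim class_ring (vs (span S))"
    unfolding rank_def using vectorspace.subspace_dim[OF vs] by simp
  then show ?thesis using dim_span_le_card[OF S] by simp
qed

lemma (in vec_space) spanning_set_of_card_rank:
  assumes A: "A \<in> carrier_mat n nc"
  obtains S where "finite S" "S \<subseteq> carrier_vec n" "card S = rank A" "set (cols A) \<subseteq> span S"
proof -
  obtain U where U: "maximal U (\<lambda>T. T \<subseteq> set (cols A) \<and> lin_indpt T)"
    using maximal_exists[of "\<lambda>T. T \<subseteq> set (cols A) \<and> lin_indpt T" "card (set (cols A))" "{}"]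
    by (meson List.finite_set card_mono empty_iff empty_subsetI finite_lin_indpt2 rev_finite_subset)
  have cols: "set (cols A) \<subseteq> carrier_vec n" using A cols_dim by blast
  have UA: "U \<subseteq> set (cols A)" and indpt: "lin_indpt U" using U by (auto simp: maximal_def)
  have "c \<in> span U" if c: "c \<in> set (cols A)" for c
  proof (rule ccontr)
    assume c_out: "c \<notin> span U"
    then have "c \<notin> U" using in_own_span[of U] UA cols by blast
    moreover have "lin_indpt (U \<union> {c})"
      using lin_dep_iff_in_span[of U c] UA indpt cols c c_out \<open>c \<notin> U\<close> by blast
    ultimately show False using U c UA unfolding maximal_def by blast
  qed
  then show thesis
    using that[of U] finite_subset[OF UA] UA cols rank_card_indpt[OF A U] by auto
qed

lemma (in vec_space) rank_mono_cols:
  assumes A: "A \<in> carrier_mat n nc" and B: "B \<in> carrier_mat n nc'"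
    and "set (cols A) \<subseteq> set (cols B)"
  shows "rank A \<le> rank B"
proof -
  obtain S where "finite S" "S \<subseteq> carrier_vec n" "card S = rank B" "set (cols B) \<subseteq> span S"
    using spanning_set_of_card_rank[OF B] .
  then show ?thesis using rank_le_card_of_cols_subset_span[OF A] assms(3) by fastforce
qed

lemma (in vec_space) entry_eq_0_of_rank_eq_0:
  assumes A: "A \<in> carrier_mat n nc" and "rank A = 0" and i: "i < n" and j: "j < nc"
  shows "A $$ (i,j) = 0"
proof -
  obtain S where "finite S" "card S = rank A" "set (cols A) \<subseteq> span S"
    using spanning_set_of_card_rank[OF A] by metis
  with \<open>rank A = 0\<close> have "set (cols A) \<subseteq> {0\<^sub>v n}" using span_empty by simp
  moreover have "col A j \<in> set (cols A)" using A j by (auto simp: cols_def)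
  ultimately have "col A j = 0\<^sub>v n" by blast
  then show ?thesis using A i j by (metis carrier_matD(1) col_def index_vec index_zero_vec(1))
qed

lemma (in vec_space) submodule_preimage_linear:
  assumes N: "submodule class_ring N V"
    and carrier: "\<And>v. v \<in> carrier_vec n \<Longrightarrow> f v \<in> carrier_vec n"
    and add: "\<And>v w. v \<in> carrier_vec n \<Longrightarrow> w \<in> carrier_vec n \<Longrightarrow> f (v + w) = f v + f w"
    and smult: "\<And>c v. v \<in> carrier_vec n \<Longrightarrow> f (c \<cdot>\<^sub>v v) = c \<cdot>\<^sub>v f v"
    and zero: "f (0\<^sub>v n) = 0\<^sub>v n"
  shows "submodule class_ring {v \<in> carrier_vec n. f v \<in> N} V"
proof -
  interpret N: submodule class_ring N V by (rule N)
  show ?thesis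
    by unfold_locales (use carrier add smult zero N.m_closed N.smult_closed N.zero_closed in auto)
qed

text \<open>The set of \<open>v\<close> with \<open>vec_hadamard v w\<close> in a subspace is itself a subspace, so it suffices
  to check membership on a spanning set; this is done once in each argument.\<close>

lemma (in vec_space) vec_hadamard_in_span_products:
  assumes S: "finite S" "S \<subseteq> carrier_vec n" and T: "finite T" "T \<subseteq> carrier_vec n"
    and a: "a \<in> span S" and b: "b \<in> span T"
  shows "vec_hadamard a b \<in> span ((\<lambda>(u,w). vec_hadamard u w) ` (S \<times> T))"
proof -
  let ?P = "(\<lambda>(u,w). vec_hadamard u w) ` (S \<times> T)"
  have "?P \<subseteq> carrier_vec n" using S T by (auto simp: vec_hadamard_def)
  then have span_P: "submodule class_ring (span ?P) V" and P_in: "?P \<subseteq> span ?P"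
    by (simp_all add: span_is_submodule in_own_span)
  have left: "submodule class_ring {v \<in> carrier_vec n. vec_hadamard v w \<in> span ?P} V"
    if "w \<in> carrier_vec n" for w
    by (rule submodule_preimage_linear[OF span_P]) (use that in \<open>auto simp: vec_hadamard_def algebra_simps\<close>)
  have right: "submodule class_ring {w \<in> carrier_vec n. vec_hadamard v w \<in> span ?P} V"
    if "v \<in> carrier_vec n" for v
    by (rule submodule_preimage_linear[OF span_P]) (use that in \<open>auto simp: vec_hadamard_def algebra_simps\<close>)
  have span_S_T: "vec_hadamard v w \<in> span ?P" if v: "v \<in> span S" and w: "w \<in> T" for v w
  proof -
    have "S \<subseteq> {v \<in> carrier_vec n. vec_hadamard v w \<in> span ?P}" using S(2) P_in w by blast
    then have "span S \<subseteq> {v \<in> carrier_vec n. vec_hadamard v w \<in> span ?P}"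
      by (rule span_is_subset[OF _ left]) (use w T in auto)
    then show ?thesis using v by blast
  qed
  have "T \<subseteq> {w \<in> carrier_vec n. vec_hadamard a w \<in> span ?P}" using T(2) span_S_T a by blast
  then have "span T \<subseteq> {w \<in> carrier_vec n. vec_hadamard a w \<in> span ?P}"
    by (rule span_is_subset[OF _ right]) (use a span_closed[OF S(2)] in blast)
  then show ?thesis using b by blast
qed

lemma (in vec_space) rank_mat_hadamard_le:
  assumes A: "A \<in> carrier_mat n nc" and B: "B \<in> carrier_mat n nc"
  shows "rank (mat_hadamard A B) \<le> rank A * rank B"
proof -
  obtain S where S: "finite S" "S \<subseteq> carrier_vec n" "card S = rank A" "set (cols A) \<subseteq> span S"
    using spanning_set_of_card_rank[OF A] .
  obtain T where T: "finite T" "T \<subseteq> carrier_vec n" "card T = rank B" "set (cols B) \<subseteq> span T"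
    using spanning_set_of_card_rank[OF B] .
  let ?P = "(\<lambda>(u,w). vec_hadamard u w) ` (S \<times> T)"
  have H: "mat_hadamard A B \<in> carrier_mat n nc" using A by (simp add: mat_hadamard_def)
  have "set (cols (mat_hadamard A B)) \<subseteq> span ?P"
  proof
    fix c assume "c \<in> set (cols (mat_hadamard A B))"
    then obtain j where j: "j < nc" "c = col (mat_hadamard A B) j"
      using H by (auto simp: in_set_conv_nth)
    have "col A j \<in> span S" "col B j \<in> span T" using S(4) T(4) j A B by (auto simp: cols_def)
    then show "c \<in> span ?P"
      unfolding j(2) col_mat_hadamard[OF A B j(1)] by (rule vec_hadamard_in_span_products[OF S(1,2) T(1,2)])
  qed
  moreover have "?P \<subseteq> carrier_vec n" using S T by (auto simp: vec_hadamard_def)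
  ultimately have "rank (mat_hadamard A B) \<le> card ?P"
    using rank_le_card_of_cols_subset_span[OF H] S T by simp
  also have "\<dots> \<le> card S * card T"
    by (metis card_cartesian_product card_image_le finite_cartesian_product S(1) T(1))
  finally show ?thesis using S(3) T(3) by simp
qed

lemma qtt_unfolding_carrier: "qtt_unfolding m y l \<in> carrier_mat (2^l) (2^(m-l))"
  by (simp add: qtt_unfolding_def)

lemma qtt_unfolding_index_less:
  fixes a b :: nat
  assumes "l \<le> m" "a < 2^l" "b < 2^(m-l)"
  shows "a + 2^l * b < 2^m"
proof -
  have "a + 2^l * b < 2^l * (b + 1)" using assms by simp
  also have "\<dots> \<le> 2^l * 2^(m-l)" using assms by (intro mult_left_mono) auto
  also have "\<dots> = 2^m" using assms by (simp add: power_add[symmetric])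
  finally show ?thesis .
qed

lemma qtt_unfolding_hadamard:
  "qtt_unfolding m (F \<odot> g) l = mat_hadamard (qtt_unfolding m F l) (qtt_unfolding m g l)"
  by (rule eq_matI) (auto simp: qtt_unfolding_def mat_hadamard_def hadamard_def)

lemma tt_rank_hadamard_le: "tt_rank m (F \<odot> g) l \<le> tt_rank m F l * tt_rank m g l"
  unfolding tt_rank_def qtt_unfolding_hadamard
  by (rule vec_space.rank_mat_hadamard_le[OF qtt_unfolding_carrier qtt_unfolding_carrier])

lemma tt_rank_le_qtt_rank:
  assumes "2 \<le> m" "1 \<le> l" "l \<le> m - 1"
  shows "tt_rank m y l \<le> qtt_rank m y"
  using assms by (simp add: qtt_rank_def)

lemma tt_rank_eq_0_of_vanishing:
  assumes "l \<le> m" and zero: "\<And>i. i < 2^m \<Longrightarrow> y i = 0"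
  shows "tt_rank m y l = 0"
proof -
  have "qtt_unfolding m y l = 0\<^sub>m (2^l) (2^(m-l))"
    by (rule eq_matI) (auto simp: qtt_unfolding_def zero qtt_unfolding_index_less[OF \<open>l \<le> m\<close>])
  then show ?thesis unfolding tt_rank_def by (simp add: vec_space.rank_0I)
qed

lemma vanishing_of_tt_rank_eq_0:
  assumes "tt_rank m y l = 0" "l \<le> m" "i < 2^m"
  shows "y i = 0"
proof -
  have "(2::nat)^m = 2^l * 2^(m-l)" using assms(2) by (simp add: power_add[symmetric])
  then have "i div 2^l < 2^(m-l)" using assms(3) by (simp add: less_mult_imp_div_less mult.commute)
  then have "qtt_unfolding m y l $$ (i mod 2^l, i div 2^l) = 0"
    using assms(1) unfolding tt_rank_def
    by (intro vec_space.entry_eq_0_of_rank_eq_0[OF qtt_unfolding_carrier]) auto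
  then show ?thesis by (simp add: qtt_unfolding_def \<open>i div 2^l < 2^(m-l)\<close>)
qed

lemma qtt_rank_pos:
  assumes "i < 2^m" "y i \<noteq> 0"
  shows "0 < qtt_rank m y"
proof -
  define l where "l = (if 2 \<le> m then 1 else (0::nat))"
  have "tt_rank m y l \<le> qtt_rank m y"
    by (cases "2 \<le> m") (simp_all add: l_def qtt_rank_def)
  moreover have "l \<le> m" by (simp add: l_def)
  then have "tt_rank m y l \<noteq> 0" using vanishing_of_tt_rank_eq_0 assms by blast
  ultimately show ?thesis by simp
qed

lemma add_mult_pow2_mod_pow2:
  fixes a b :: nat
  assumes "a < 2^l" "l \<le> P"
  shows "(a + 2^l * b) mod 2^P = a + 2^l * (b mod 2^(P-l))"
proof -
  have "(2::nat)^P = 2^l * 2^(P-l)" using assms(2) by (simp add: power_add[symmetric])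
  then have "(a + 2^l * b) mod 2^P = 2^l * ((a + 2^l * b) div 2^l mod 2^(P-l)) + (a + 2^l * b) mod 2^l"
    by (simp add: mod_mult2_eq)
  with assms(1) show ?thesis by simp
qed

lemma tt_rank_periodic_le_tt_rank:
  assumes "P \<le> m" "l < P" and periodic: "\<And>i. i < 2^m \<Longrightarrow> x i = y (i mod 2^P)"
  shows "tt_rank m x l \<le> tt_rank P y l"
proof -
  let ?X = "qtt_unfolding m x l" and ?Y = "qtt_unfolding P y l"
  have "col ?X j = col ?Y (j mod 2^(P-l))" if j: "j < 2^(m-l)" for j
  proof (rule eq_vecI)
    fix a assume "a < dim_vec (col ?Y (j mod 2^(P-l)))"
    then have a: "a < 2^l" by (simp add: qtt_unfolding_def)
    have "a + 2^l * j < 2^m" using qtt_unfolding_index_less[OF _ a j] assms(1,2) by simp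
    then show "col ?X j $ a = col ?Y (j mod 2^(P-l)) $ a"
      using a j periodic add_mult_pow2_mod_pow2[OF a, of P j] assms(2) by (simp add: qtt_unfolding_def)
  qed (simp add: qtt_unfolding_def)
  then have "set (cols ?X) \<subseteq> set (cols ?Y)"
    by (auto simp: cols_def qtt_unfolding_def)
  then show ?thesis unfolding tt_rank_def
    by (rule vec_space.rank_mono_cols[OF qtt_unfolding_carrier qtt_unfolding_carrier])
qed

lemma tt_rank_periodic_le_1:
  assumes "P \<le> l" "l \<le> m" and periodic: "\<And>i. i < 2^m \<Longrightarrow> x i = y (i mod 2^P)"
  shows "tt_rank m x l \<le> 1"
  unfolding tt_rank_def
proof (rule vec_space.rank_le_1_product_entries[OF qtt_unfolding_carrier, where f="\<lambda>a. y (a mod 2^P)" and g="\<lambda>_. 1"])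
  fix a b assume "a < dim_row (qtt_unfolding m x l)" "b < dim_col (qtt_unfolding m x l)"
  then have ab: "a < 2^l" "b < 2^(m-l)" by (simp_all add: qtt_unfolding_def)
  have "(2::nat)^P dvd 2^l * b" using \<open>P \<le> l\<close> by (simp add: le_imp_power_dvd)
  then have "(a + 2^l * b) mod 2^P = a mod 2^P" by (metis mod_add_right_eq dvd_imp_mod_0 add_0_right)
  then show "qtt_unfolding m x l $$ (a, b) = y (a mod 2^P) * 1"
    using ab periodic qtt_unfolding_index_less[OF \<open>l \<le> m\<close> ab] by (simp add: qtt_unfolding_def)
qed

lemma tt_rank_periodic_le_qtt_rank:
  assumes "P \<le> m" "1 \<le> l" "l \<le> m" and periodic: "\<And>i. i < 2^m \<Longrightarrow> x i = y (i mod 2^P)"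
  shows "tt_rank m x l \<le> qtt_rank P y"
proof (cases "\<exists>i < 2^P. y i \<noteq> 0")
  case False
  then have "tt_rank m x l = 0" by (intro tt_rank_eq_0_of_vanishing) (simp_all add: periodic \<open>l \<le> m\<close>)
  then show ?thesis by simp
next
  case True
  then have pos: "1 \<le> qtt_rank P y" using qtt_rank_pos by (metis One_nat_def Suc_leI)
  show ?thesis
  proof (cases "l < P")
    case True
    then have "tt_rank m x l \<le> tt_rank P y l" using tt_rank_periodic_le_tt_rank assms by blast
    also have "\<dots> \<le> qtt_rank P y" using True assms(2) by (intro tt_rank_le_qtt_rank) auto
    finally show ?thesis .
  next
    case False
    then show ?thesis using tt_rank_periodic_le_1[of P l m x y] assms pos by simp
  qed
qed

lemma block_embed_eq:
  assumes "0 < n1"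
  shows "block_embed n1 x0 k i = (if k = i div n1 then x0 (i mod n1) else 0)"
proof -
  have "(k * n1 \<le> i \<and> i < (k+1) * n1) = (k = i div n1)"
  proof
    assume "k * n1 \<le> i \<and> i < (k+1) * n1"
    then show "k = i div n1" by (intro div_nat_eqI[symmetric]) (simp_all add: mult.commute)
  next
    assume "k = i div n1"
    then show "k * n1 \<le> i \<and> i < (k+1) * n1"
      using assms by (simp add: div_times_less_eq_dividend dividend_less_div_times)
  qed
  moreover have "i - i div n1 * n1 = i mod n1" by (simp add: minus_div_mult_eq_mod)
  ultimately show ?thesis unfolding block_embed_def by auto
qed

lemma sum_block_embed_eq_periodic:
  assumes "i < n1 * n2"
  shows "(\<Sum>k<n2. block_embed n1 x0 k i) = x0 (i mod n1)"
proof -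
  have "0 < n1" using assms by (metis gr0I mult_0 not_less0)
  moreover have "i div n1 < n2" using assms by (simp add: less_mult_imp_div_less mult.commute)
  ultimately show ?thesis by (simp add: block_embed_eq)
qed

theorem lemma4p2:
  fixes L1 L2 :: nat and x0 F :: "nat \<Rightarrow> real" and r0 :: nat
  assumes "L1 \<ge> 1" and "L2 \<ge> 1"
    and "r0 = qtt_rank L1 x0"
  shows "qtt_rank (L1 + L2)
           (F \<odot> (\<lambda>i. \<Sum>k<2^L2. block_embed (2^L1) x0 k i))
         \<le> qtt_rank (L1 + L2) F * r0"
proof -
  define m where "m = L1 + L2"
  define x where "x = (\<lambda>i. \<Sum>k<2^L2. block_embed (2^L1) x0 k i)"
  have periodic: "x i = x0 (i mod 2^L1)" if "i < 2^m" for i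
    using that sum_block_embed_eq_periodic unfolding x_def m_def by (simp add: power_add)
  have m: "2 \<le> m" using assms(1,2) by (simp add: m_def)
  have "tt_rank m (F \<odot> x) l \<le> qtt_rank m F * r0" if l: "l \<in> {1..m-1}" for l
  proof -
    have "tt_rank m (F \<odot> x) l \<le> tt_rank m F l * tt_rank m x l" by (rule tt_rank_hadamard_le)
    also have "\<dots> \<le> qtt_rank m F * r0"
      using l m periodic tt_rank_le_qtt_rank[of m l F]
        tt_rank_periodic_le_qtt_rank[of L1 m l x x0] assms(3)
      by (intro mult_mono) (auto simp: m_def)
    finally show ?thesis .
  qed
  then have "Max (tt_rank m (F \<odot> x) ` {1..m-1}) \<le> qtt_rank m F * r0"
    using m by (subst Max_le_iff) auto
  moreover have "qtt_rank m (F \<odot> x) = Max (tt_rank m (F \<odot> x) ` {1..m-1})"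
    using m by (simp add: qtt_rank_def)
  ultimately show ?thesis unfolding x_def m_def by simp
qed

end
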